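(* Let $n\ge2$, let $\mathcal A$ be a maximal commutative subalgebra of $\mathcal M_d(\mathbb C)$, and let $\mathcal B$ be a maximal subalgebra of $\mathcal T_{n,d}[\mathcal A]$. Then: (i) $\mathcal D_{n,d}[\mathcal A]\subset\mathcal B$; (ii) if $A\in\mathcal B$, then $\mathbf E_k(A)\in\mathcal B$ for all $0\le k\le n-1$; (iii) $\mathcal B$ coincides with the linear span of $\mathbf E_0(\mathcal B),\dots,\mathbf E_{n-1}(\mathcal B)$; (iv) $\mathcal B$ is invariant under the action of $\mathfrak S_{n-1}$, i.e. $\sigma(A)\in\mathcal B$ for all $A\in\mathcal B$, $\sigma\in\mathfrak S_{n-1}$; (v) $\mathbf E_k(\mathcal B)\neq\{0\}$ for every $k=0,\dots,n-1$.
   Context: A block Toeplitz matrix is an $n\times n$ block matrix $A=(A_{i-j})_{i,j=0}^{n-1}$ with $A_m\in\mathcal M_d(\mathbb C)$. For $\mathcal A\subset\mathcal M_d(\mathbb C)$, $\mathcal T_{n,d}[\mathcal A]$ is the set of block Toeplitz matrices with all $A_m\in\mathcal A$, and $\mathcal D_{n,d}[\mathcal A]$ the set of those with additionally $A_m=0$ for $m\ne0$. A maximal subalgebra of $\mathcal T_{n,d}[\mathcal A]$ is a subalgebra of the matrix algebra (a linear subspace closed under multiplication) contained in $\mathcal T_{n,d}[\mathcal A]$ and maximal under inclusion among such. For $k=0,\dots,n-1$, $\mathbf E_k$ maps an $n\times n$ block matrix $T$ to the block matrix whose $(i,j)$ entry is $T_{i,j}$ if $i-j\in\{k,k-n\}$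 and $0$ otherwise. The group $\mathfrak S_{n-1}$ of permutations of $\{1,\dots,n-1\}$ acts on block Toeplitz matrices by $B=\sigma(A)$ with $B_0=A_0$, $B_k=A_{\sigma^{-1}(k)}$, $B_{k-n}=A_{\sigma^{-1}(k)-n}$ for $1\le k\le n-1$. *)

theory Defs
  imports "Jordan_Normal_Form.Matrix" "HOL-Combinatorics.Permutations"
begin

text \<open>Matrices are Jordan_Normal_Form matrices over complex. An n x n block matrix with
d x d blocks is an (n*d) x (n*d) matrix; block (i,j) has entries at rows i*d+a, columns j*d+b.\<close>

definition mat_subspace :: "nat \<Rightarrow> complex mat set \<Rightarrow> bool" where
  "mat_subspace N S \<longleftrightarrow> S \<subseteq> carrier_mat N N \<and> 0\<^sub>m N N \<in> S \<and>
     (\<forall>X\<in>S. \<forall>Y\<in>S. X + Y \<in> S) \<and> (\<forall>c. \<forall>X\<in>S. c \<cdot>\<^sub>m X \<in> S)"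

definition mat_subalg :: "nat \<Rightarrow> complex mat set \<Rightarrow> bool" where
  "mat_subalg N S \<longleftrightarrow> mat_subspace N S \<and> (\<forall>X\<in>S. \<forall>Y\<in>S. X * Y \<in> S)"

definition comm_mat_subalg :: "nat \<Rightarrow> complex mat set \<Rightarrow> bool" where
  "comm_mat_subalg N S \<longleftrightarrow> mat_subalg N S \<and> (\<forall>X\<in>S. \<forall>Y\<in>S. X * Y = Y * X)"

definition maximal_comm_subalg :: "nat \<Rightarrow> complex mat set \<Rightarrow> bool" where
  "maximal_comm_subalg N S \<longleftrightarrow> comm_mat_subalg N S \<and>
     (\<forall>S'. comm_mat_subalg N S' \<and> S \<subseteq> S' \<longrightarrow> S' = S)"

definition maximal_subalg_in :: "nat \<Rightarrow> complex mat set \<Rightarrow> complex mat set \<Rightarrow> bool" where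
  "maximal_subalg_in N T S \<longleftrightarrow> mat_subalg N S \<and> S \<subseteq> T \<and>
     (\<forall>S'. mat_subalg N S' \<and> S \<subseteq> S' \<and> S' \<subseteq> T \<longrightarrow> S' = S)"

definition mat_span :: "nat \<Rightarrow> complex mat set \<Rightarrow> complex mat set" where
  "mat_span N X = \<Inter>{S. mat_subspace N S \<and> X \<subseteq> S}"

definition toep :: "nat \<Rightarrow> nat \<Rightarrow> (int \<Rightarrow> complex mat) \<Rightarrow> complex mat" where
  "toep n d A = mat (n*d) (n*d)
     (\<lambda>(r,c). A (int (r div d) - int (c div d)) $$ (r mod d, c mod d))"

definition toeplitz_set :: "nat \<Rightarrow> nat \<Rightarrow> complex mat set \<Rightarrow> complex mat set" where
  "toeplitz_set n d \<A> = {toep n d A | A. \<forall>m\<in>{-(int n - 1)..int n - 1}. A m \<in> \<A>}"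

definition diag_toeplitz_set :: "nat \<Rightarrow> nat \<Rightarrow> complex mat set \<Rightarrow> complex mat set" where
  "diag_toeplitz_set n d \<A> = {toep n d A | A. (\<forall>m\<in>{-(int n - 1)..int n - 1}. A m \<in> \<A>)
      \<and> (\<forall>m\<in>{-(int n - 1)..int n - 1}. m \<noteq> 0 \<longrightarrow> A m = 0\<^sub>m d d)}"

definition E_op :: "nat \<Rightarrow> nat \<Rightarrow> nat \<Rightarrow> complex mat \<Rightarrow> complex mat" where
  "E_op n d k T = mat (n*d) (n*d)
     (\<lambda>(r,c). if int (r div d) - int (c div d) = int k \<or>
                 int (r div d) - int (c div d) = int k - int n
              then T $$ (r,c) else 0)"

definition blk :: "nat \<Rightarrow> complex mat \<Rightarrow> nat \<Rightarrow> nat \<Rightarrow> complex mat" where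
  "blk d T i j = mat d d (\<lambda>(a,b). T $$ (i*d+a, j*d+b))"

definition toep_symbol :: "nat \<Rightarrow> complex mat \<Rightarrow> int \<Rightarrow> complex mat" where
  "toep_symbol d T m = (if m \<ge> 0 then blk d T (nat m) 0 else blk d T 0 (nat (-m)))"

definition perm_act :: "nat \<Rightarrow> nat \<Rightarrow> (nat \<Rightarrow> nat) \<Rightarrow> complex mat \<Rightarrow> complex mat" where
  "perm_act n d \<sigma> T = toep n d (\<lambda>m.
      if m = 0 then toep_symbol d T 0
      else if m > 0 then toep_symbol d T (int (inv_into UNIV \<sigma> (nat m)))
      else toep_symbol d T (int (inv_into UNIV \<sigma> (nat (m + int n))) - int n))"

end

theory Submission
  imports Defs
begin

text \<open>
  The product of the block Toeplitz matrices with symbols \<open>A\<close> and \<open>B\<close> is again block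
  Toeplitz iff \<open>A(p) B(q - n) = A(p - n) B(q)\<close> for all \<open>1 \<le> p, q < n\<close>; its symbol is then read
  off from the first block column and row. Over a commutative \<open>\<A>\<close> a block Toeplitz algebra is
  therefore governed by the lag pairs \<open>(A(p), A(p - n))\<close>, which are exactly the two blocks
  that \<open>E\<^sub>p\<close> keeps. For every \<open>\<A>\<close>-submodule \<open>W\<close> of \<open>\<A> \<times> \<A>\<close> on which \<open>x y' = y x'\<close> holds
  pairwise, the block Toeplitz matrices all of whose lag pairs lie in \<open>W\<close> form a subalgebra, and
  a maximal subalgebra \<open>\<B>\<close> is the one attached to the module generated by its own lag pairs.
  Membership in \<open>\<B>\<close> thus constrains every lag pair separately, which yields the diagonal,
  the closure under each \<open>E\<^sub>k\<close> and under permutations of the lags, and the span decomposition;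
  maximality also forces the module to be nonzero, so no \<open>E\<^sub>k(\<B>)\<close> vanishes.
\<close>

lemma block_index_div_mod:
  fixes d :: nat assumes "a < d"
  shows "(i*d + a) div d = i" "(i*d + a) mod d = a"
  using assms by auto

lemma block_index_less:
  fixes d :: nat assumes "i < n" "a < d" shows "i*d + a < n*d"
proof -
  have "i*d + a < Suc i * d" using assms(2) by simp
  also have "\<dots> \<le> n*d" using assms(1) by (intro mult_right_mono) auto
  finally show ?thesis .
qed

lemma block_mod_less: fixes d :: nat shows "r < n*d \<Longrightarrow> r mod d < d"
  by (cases "d = 0") auto

lemma sum_blocks:
  fixes f :: "nat \<Rightarrow> 'a::comm_monoid_add"
  shows "(\<Sum>k<n*d. f k) = (\<Sum>i<n. \<Sum>a<d. f (i*d + a))"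
  by (simp add: sum.nat_group[symmetric] sum.shift_bounds_nat_ivl[of f 0 _ d, simplified]
      atLeast0LessThan add.commute)

lemma bij_betw_rotate_lessThan:
  fixes m n :: nat
  assumes "m \<le> n"
  shows "bij_betw (\<lambda>l. if l < m then l + n - m else l - m) {..<n} {..<n}"
proof -
  define \<phi> :: "nat \<Rightarrow> nat" where "\<phi> = (\<lambda>l. if l < m then l + n - m else l - m)"
  define \<psi> :: "nat \<Rightarrow> nat" where "\<psi> = (\<lambda>u. if u < n - m then u + m else u + m - n)"
  have "bij_betw \<phi> {..<n} {..<n}"
  proof (rule bij_betw_byWitness[where f' = \<psi>])
    show "\<forall>l\<in>{..<n}. \<psi> (\<phi> l) = l" using assms by (auto simp: \<phi>_def \<psi>_def)
    show "\<forall>u\<in>{..<n}. \<phi> (\<psi> u) = u" using assms by (auto simp: \<phi>_def \<psi>_def)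
    show "\<phi> ` {..<n} \<subseteq> {..<n}" using assms by (auto simp: \<phi>_def)
    show "\<psi> ` {..<n} \<subseteq> {..<n}" using assms by (auto simp: \<psi>_def)
  qed
  then show ?thesis by (simp add: \<phi>_def)
qed

text \<open>\<open>'a mat\<close> is not a \<open>comm_monoid_add\<close> (the zero matrix depends on the dimension),
  so finite sums of \<open>d \<times> d\<close> matrices are spelled out.\<close>
fun mat_sum :: "nat \<Rightarrow> (nat \<Rightarrow> 'a::monoid_add mat) \<Rightarrow> nat \<Rightarrow> 'a mat" where
  "mat_sum d f 0 = 0\<^sub>m d d"
| "mat_sum d f (Suc k) = mat_sum d f k + f k"

lemma mat_sum_carrier:
  "(\<And>l. l < k \<Longrightarrow> f l \<in> carrier_mat d d) \<Longrightarrow> mat_sum d f k \<in> carrier_mat d d"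
  by (induction k) auto

lemma index_mat_sum:
  fixes f :: "nat \<Rightarrow> 'a::comm_monoid_add mat"
  assumes "\<And>l. l < k \<Longrightarrow> f l \<in> carrier_mat d d" "a < d" "b < d"
  shows "mat_sum d f k $$ (a,b) = (\<Sum>l<k. f l $$ (a,b))"
  using assms
proof (induction k)
  case (Suc k)
  have "dim_row (f k) = d" "dim_col (f k) = d" using Suc.prems(1)[of k] by auto
  with Suc show ?case by simp
qed simp

lemma mat_sum_closed:
  assumes "0\<^sub>m d d \<in> S" "\<And>X Y. X \<in> S \<Longrightarrow> Y \<in> S \<Longrightarrow> X + Y \<in> S" "\<And>l. l < k \<Longrightarrow> f l \<in> S"
  shows "mat_sum d f k \<in> S"
  using assms(3) by (induction k) (auto intro: assms(1,2))

lemma mat_sum_pair_closed: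
  assumes "(0\<^sub>m d d, 0\<^sub>m d d) \<in> W"
    and "\<And>x y x' y'. (x, y) \<in> W \<Longrightarrow> (x', y') \<in> W \<Longrightarrow> (x + x', y + y') \<in> W"
    and "\<And>l. l < k \<Longrightarrow> (f l, g l) \<in> W"
  shows "(mat_sum d f k, mat_sum d g k) \<in> W"
  using assms(3) by (induction k) (auto intro: assms(1,2))

lemma mat_sum_Suc_shift:
  fixes f :: "nat \<Rightarrow> 'a::comm_monoid_add mat"
  assumes f: "\<And>l. l < Suc k \<Longrightarrow> f l \<in> carrier_mat d d"
  shows "mat_sum d f (Suc k) = f 0 + mat_sum d (\<lambda>l. f (Suc l)) k"
proof -
  have f': "\<And>l. l < k \<Longrightarrow> f (Suc l) \<in> carrier_mat d d" using f by simp
  have S: "mat_sum d (\<lambda>l. f (Suc l)) k \<in> carrier_mat d d" using f' by (rule mat_sum_carrier)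
  have S': "mat_sum d f (Suc k) \<in> carrier_mat d d" using f by (rule mat_sum_carrier)
  have f0: "f 0 \<in> carrier_mat d d" using f by simp
  show ?thesis
  proof (rule eq_matI)
    fix a b assume "a < dim_row (f 0 + mat_sum d (\<lambda>l. f (Suc l)) k)"
      "b < dim_col (f 0 + mat_sum d (\<lambda>l. f (Suc l)) k)"
    hence ab: "a < d" "b < d" using S by auto
    have "mat_sum d f (Suc k) $$ (a,b) = (\<Sum>l<Suc k. f l $$ (a,b))"
      using f ab by (rule index_mat_sum)
    also have "\<dots> = f 0 $$ (a,b) + (\<Sum>l<k. f (Suc l) $$ (a,b))"
      by (rule sum.lessThan_Suc_shift)
    also have "\<dots> = (f 0 + mat_sum d (\<lambda>l. f (Suc l)) k) $$ (a,b)"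
      using ab S f0 by (simp add: index_mat_sum[OF f'])
    finally show "mat_sum d f (Suc k) $$ (a,b) = (f 0 + mat_sum d (\<lambda>l. f (Suc l)) k) $$ (a,b)" .
  qed (use S S' f0 in auto)
qed

lemma mat_sum_reindex:
  fixes f g :: "nat \<Rightarrow> 'a::comm_monoid_add mat"
  assumes bij: "bij_betw \<phi> {..<k} {..<k}" and fg: "\<And>l. l < k \<Longrightarrow> g (\<phi> l) = f l"
    and f: "\<And>l. l < k \<Longrightarrow> f l \<in> carrier_mat d d"
  shows "mat_sum d f k = mat_sum d g k"
proof -
  have g: "g u \<in> carrier_mat d d" if "u < k" for u
  proof -
    obtain l where "l < k" "u = \<phi> l" using bij \<open>u < k\<close> by (auto simp: bij_betw_def)
    thus ?thesis using f fg by simp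
  qed
  have Sf: "mat_sum d f k \<in> carrier_mat d d" using f by (rule mat_sum_carrier)
  have Sg: "mat_sum d g k \<in> carrier_mat d d" using g by (rule mat_sum_carrier)
  show ?thesis
  proof (rule eq_matI)
    fix a b assume "a < dim_row (mat_sum d g k)" "b < dim_col (mat_sum d g k)"
    hence ab: "a < d" "b < d" using Sg by auto
    have "(\<Sum>l<k. f l $$ (a,b)) = (\<Sum>u<k. g u $$ (a,b))"
      using sum.reindex_bij_betw[OF bij, of "\<lambda>u. g u $$ (a,b)"] fg by simp
    thus "mat_sum d f k $$ (a,b) = mat_sum d g k $$ (a,b)"
      using ab f g by (simp add: index_mat_sum)
  qed (use Sf Sg in auto)
qed

lemma mat_add_comm_cancel:
  fixes X Y Z :: "'a::cancel_comm_monoid_add mat"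
  assumes "X \<in> carrier_mat d d" "Y \<in> carrier_mat d d" "Z \<in> carrier_mat d d"
  shows "X + Z = Z + Y \<longleftrightarrow> X = Y"
proof
  assume eq: "X + Z = Z + Y"
  show "X = Y"
  proof (rule eq_matI)
    fix i j assume "i < dim_row Y" "j < dim_col Y"
    moreover have "(X + Z) $$ (i,j) = (Z + Y) $$ (i,j)" using eq by simp
    ultimately show "X $$ (i,j) = Y $$ (i,j)"
      using assms by (simp add: add.commute)
  qed (use assms in auto)
qed (use assms in \<open>simp add: comm_add_mat\<close>)

lemma mult_add_smult_one:
  fixes X Y :: "'a::comm_ring_1 mat"
  assumes X: "X \<in> carrier_mat d d" and Y: "Y \<in> carrier_mat d d"
  shows "(X + a \<cdot>\<^sub>m 1\<^sub>m d) * (Y + b \<cdot>\<^sub>m 1\<^sub>m d) = (X * Y + b \<cdot>\<^sub>m X + a \<cdot>\<^sub>m Y) + (a * b) \<cdot>\<^sub>m 1\<^sub>m d"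
proof -
  have "(X + a \<cdot>\<^sub>m 1\<^sub>m d) * (Y + b \<cdot>\<^sub>m 1\<^sub>m d)
      = X * (Y + b \<cdot>\<^sub>m 1\<^sub>m d) + (a \<cdot>\<^sub>m 1\<^sub>m d) * (Y + b \<cdot>\<^sub>m 1\<^sub>m d)"
    using X Y by (intro add_mult_distrib_mat[of _ d d]) auto
  also have "X * (b \<cdot>\<^sub>m 1\<^sub>m d) = b \<cdot>\<^sub>m X"
    using mult_smult_distrib[of X d d "1\<^sub>m d" d b] X by simp
  then have "X * (Y + b \<cdot>\<^sub>m 1\<^sub>m d) = X * Y + b \<cdot>\<^sub>m X"
    using X Y by (simp add: mult_add_distrib_mat[of _ d d])
  also have "(a \<cdot>\<^sub>m 1\<^sub>m d) * (Y + b \<cdot>\<^sub>m 1\<^sub>m d) = a \<cdot>\<^sub>m (Y + b \<cdot>\<^sub>m 1\<^sub>m d)"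
    using Y by (simp add: mult_smult_assoc_mat[of "1\<^sub>m d" d d _ d])
  also have "X * Y + b \<cdot>\<^sub>m X + a \<cdot>\<^sub>m (Y + b \<cdot>\<^sub>m 1\<^sub>m d)
      = (X * Y + b \<cdot>\<^sub>m X + a \<cdot>\<^sub>m Y) + (a * b) \<cdot>\<^sub>m 1\<^sub>m d"
    using X Y by (intro eq_matI) (auto simp: algebra_simps)
  finally show ?thesis .
qed

lemma one_mat_neq_zero_mat: "0 < d \<Longrightarrow> (1\<^sub>m d :: 'a::zero_neq_one mat) \<noteq> 0\<^sub>m d d"
proof
  assume "0 < d" "1\<^sub>m d = (0\<^sub>m d d :: 'a mat)"
  then have "(1\<^sub>m d :: 'a mat) $$ (0, 0) = 0\<^sub>m d d $$ (0, 0)" by simp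
  with \<open>0 < d\<close> show False by simp
qed

lemma comm_mat_subalg_add_scalars:
  assumes "comm_mat_subalg d S"
  shows "comm_mat_subalg d {X + c \<cdot>\<^sub>m 1\<^sub>m d | X c. X \<in> S}" (is "comm_mat_subalg d ?S")
proof -
  have car: "\<And>X. X \<in> S \<Longrightarrow> X \<in> carrier_mat d d" and zero: "0\<^sub>m d d \<in> S"
    and add: "\<And>X Y. X \<in> S \<Longrightarrow> Y \<in> S \<Longrightarrow> X + Y \<in> S"
    and smult: "\<And>c X. X \<in> S \<Longrightarrow> c \<cdot>\<^sub>m X \<in> S"
    and mult: "\<And>X Y. X \<in> S \<Longrightarrow> Y \<in> S \<Longrightarrow> X * Y \<in> S"
    and comm: "\<And>X Y. X \<in> S \<Longrightarrow> Y \<in> S \<Longrightarrow> X * Y = Y * X"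
    using assms unfolding comm_mat_subalg_def mat_subalg_def mat_subspace_def by auto
  show ?thesis
    unfolding comm_mat_subalg_def mat_subalg_def mat_subspace_def
  proof (intro conjI ballI allI)
    show "?S \<subseteq> carrier_mat d d" using car by auto
    have "0\<^sub>m d d = 0\<^sub>m d d + (0::complex) \<cdot>\<^sub>m 1\<^sub>m d" by (intro eq_matI) auto
    then show "0\<^sub>m d d \<in> ?S" using zero by blast
  next
    fix Z1 Z2 assume "Z1 \<in> ?S" "Z2 \<in> ?S"
    then obtain X a Y b where Z: "Z1 = X + a \<cdot>\<^sub>m 1\<^sub>m d" "Z2 = Y + b \<cdot>\<^sub>m 1\<^sub>m d" and XY: "X \<in> S" "Y \<in> S"
      by blast
    have X: "X \<in> carrier_mat d d" and Y: "Y \<in> carrier_mat d d" using XY car by auto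
    have "Z1 + Z2 = (X + Y) + (a + b) \<cdot>\<^sub>m 1\<^sub>m d"
      unfolding Z using X Y by (intro eq_matI) (auto simp: algebra_simps)
    then show "Z1 + Z2 \<in> ?S" using add[OF XY] by blast
    have ZZ: "Z1 * Z2 = (X * Y + b \<cdot>\<^sub>m X + a \<cdot>\<^sub>m Y) + (a * b) \<cdot>\<^sub>m 1\<^sub>m d"
      unfolding Z using X Y by (rule mult_add_smult_one)
    then show "Z1 * Z2 \<in> ?S" using add[OF add[OF mult[OF XY] smult[OF XY(1)]] smult[OF XY(2)]] by blast
    have "Z2 * Z1 = (Y * X + a \<cdot>\<^sub>m Y + b \<cdot>\<^sub>m X) + (b * a) \<cdot>\<^sub>m 1\<^sub>m d"
      unfolding Z using Y X by (rule mult_add_smult_one)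
    also have "Y * X + a \<cdot>\<^sub>m Y + b \<cdot>\<^sub>m X = X * Y + b \<cdot>\<^sub>m X + a \<cdot>\<^sub>m Y"
      unfolding comm[OF XY] using X Y by (intro eq_matI) (auto simp: algebra_simps)
    finally show "Z1 * Z2 = Z2 * Z1" unfolding ZZ by (simp add: mult.commute)
  next
    fix c Z assume "Z \<in> ?S"
    then obtain X a where Z: "Z = X + a \<cdot>\<^sub>m 1\<^sub>m d" and XS: "X \<in> S" by blast
    have "c \<cdot>\<^sub>m Z = c \<cdot>\<^sub>m X + (c * a) \<cdot>\<^sub>m 1\<^sub>m d"
      unfolding Z using car[OF XS] by (intro eq_matI) (auto simp: algebra_simps)
    then show "c \<cdot>\<^sub>m Z \<in> ?S" using smult[OF XS] by blast
  qed
qed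

lemma maximal_comm_subalg_one:
  assumes "maximal_comm_subalg d S"
  shows "1\<^sub>m d \<in> S"
proof -
  let ?S = "{X + c \<cdot>\<^sub>m 1\<^sub>m d | X c. X \<in> S}"
  have S: "comm_mat_subalg d S" using assms unfolding maximal_comm_subalg_def by auto
  then have car: "S \<subseteq> carrier_mat d d" and zero: "0\<^sub>m d d \<in> S"
    unfolding comm_mat_subalg_def mat_subalg_def mat_subspace_def by auto
  have "X = X + (0::complex) \<cdot>\<^sub>m 1\<^sub>m d" if "X \<in> S" for X
    using that car by (intro eq_matI) auto
  then have "S \<subseteq> ?S" by blast
  with assms comm_mat_subalg_add_scalars[OF S] have "?S = S"
    unfolding maximal_comm_subalg_def by blast
  moreover have "1\<^sub>m d = 0\<^sub>m d d + (1::complex) \<cdot>\<^sub>m 1\<^sub>m d" by (intro eq_matI) auto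
  ultimately show ?thesis using zero by blast
qed

section \<open>Block Toeplitz matrices and their symbols\<close>

locale block_toeplitz =
  fixes n d :: nat
begin

definition offsets :: "int set" where
  "offsets = {-(int n - 1)..int n - 1}"

lemma diff_in_offsets: "i < n \<Longrightarrow> j < n \<Longrightarrow> int i - int j \<in> offsets"
  by (auto simp: offsets_def)

lemma block_diff_in_offsets: "r < n*d \<Longrightarrow> c < n*d \<Longrightarrow> int (r div d) - int (c div d) \<in> offsets"
  by (simp add: diff_in_offsets less_mult_imp_div_less)

lemma toeplitz_set_eq: "toeplitz_set n d S = {toep n d A | A. A ` offsets \<subseteq> S}"
  unfolding toeplitz_set_def offsets_def image_subset_iff ..

lemma index_toep:
  "r < n*d \<Longrightarrow> c < n*d \<Longrightarrow> toep n d A $$ (r,c) = A (int (r div d) - int (c div d)) $$ (r mod d, c mod d)"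
  unfolding toep_def by simp

lemma toep_carrier [simp]:
  "toep n d A \<in> carrier_mat (n*d) (n*d)" "dim_row (toep n d A) = n*d" "dim_col (toep n d A) = n*d"
  unfolding toep_def by auto

lemma blk_toep:
  assumes "i < n" "j < n" "A (int i - int j) \<in> carrier_mat d d"
  shows "blk d (toep n d A) i j = A (int i - int j)"
proof (rule eq_matI)
  fix a b assume "a < dim_row (A (int i - int j))" "b < dim_col (A (int i - int j))"
  with assms(3) have "a < d" "b < d" by auto
  with assms(1,2) show "blk d (toep n d A) i j $$ (a,b) = A (int i - int j) $$ (a,b)"
    by (simp add: blk_def index_toep block_index_less block_index_div_mod)
qed (use assms(3) in \<open>auto simp: blk_def\<close>)

lemma toep_symbol_toep:
  assumes "m \<in> offsets" "A m \<in> carrier_mat d d"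
  shows "toep_symbol d (toep n d A) m = A m"
proof (cases "0 \<le> m")
  case True
  then have "toep_symbol d (toep n d A) m = blk d (toep n d A) (nat m) 0"
    by (simp add: toep_symbol_def)
  also have "\<dots> = A (int (nat m) - int 0)"
    by (rule blk_toep) (use assms True in \<open>auto simp: offsets_def\<close>)
  finally show ?thesis using True by simp
next
  case False
  then have "toep_symbol d (toep n d A) m = blk d (toep n d A) 0 (nat (-m))"
    by (simp add: toep_symbol_def)
  also have "\<dots> = A (int 0 - int (nat (-m)))"
    by (rule blk_toep) (use assms False in \<open>auto simp: offsets_def\<close>)
  finally show ?thesis using False by simp
qed

lemma toep_eqD:
  assumes "toep n d A = toep n d B" "m \<in> offsets" "A m \<in> carrier_mat d d" "B m \<in> carrier_mat d d"
  shows "A m = B m"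
  by (metis assms toep_symbol_toep)

lemma toep_cong: "(\<And>m. m \<in> offsets \<Longrightarrow> A m = B m) \<Longrightarrow> toep n d A = toep n d B"
  by (rule eq_matI) (auto simp: index_toep block_diff_in_offsets)

lemma toep_zero: "toep n d (\<lambda>_. 0\<^sub>m d d) = 0\<^sub>m (n*d) (n*d)"
  by (rule eq_matI) (auto simp: index_toep block_mod_less)

lemma toep_add:
  assumes "B ` offsets \<subseteq> carrier_mat d d"
  shows "toep n d A + toep n d B = toep n d (\<lambda>m. A m + B m)"
proof (rule eq_matI)
  fix r c assume "r < dim_row (toep n d (\<lambda>m. A m + B m))" "c < dim_col (toep n d (\<lambda>m. A m + B m))"
  then have rc: "r < n*d" "c < n*d" by auto
  with assms have "B (int (r div d) - int (c div d)) \<in> carrier_mat d d" by (auto simp: block_diff_in_offsets)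
  with rc show "(toep n d A + toep n d B) $$ (r,c) = toep n d (\<lambda>m. A m + B m) $$ (r,c)"
    by (simp add: index_toep block_mod_less)
qed auto

lemma toep_smult:
  assumes "A ` offsets \<subseteq> carrier_mat d d"
  shows "x \<cdot>\<^sub>m toep n d A = toep n d (\<lambda>m. x \<cdot>\<^sub>m A m)"
proof (rule eq_matI)
  fix r c assume "r < dim_row (toep n d (\<lambda>m. x \<cdot>\<^sub>m A m))" "c < dim_col (toep n d (\<lambda>m. x \<cdot>\<^sub>m A m))"
  then have rc: "r < n*d" "c < n*d" by auto
  with assms have "A (int (r div d) - int (c div d)) \<in> carrier_mat d d" by (auto simp: block_diff_in_offsets)
  with rc show "(x \<cdot>\<^sub>m toep n d A) $$ (r,c) = toep n d (\<lambda>m. x \<cdot>\<^sub>m A m) $$ (r,c)"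
    by (simp add: index_toep block_mod_less)
qed auto

text \<open>The lag pair at \<open>p\<close> collects the two blocks \<open>A(p)\<close>, \<open>A(p - n)\<close> that \<open>E\<^sub>p\<close> keeps;
  \<open>lag_symbol k w\<close> is the symbol supported on them.\<close>
definition lag_pair :: "(int \<Rightarrow> complex mat) \<Rightarrow> nat \<Rightarrow> complex mat \<times> complex mat" where
  "lag_pair A p = (A (int p), A (int p - int n))"

definition lag_symbol :: "nat \<Rightarrow> complex mat \<times> complex mat \<Rightarrow> int \<Rightarrow> complex mat" where
  "lag_symbol k w m = (if m = int k then fst w else if m = int k - int n then snd w else 0\<^sub>m d d)"

lemma lag_symbol_range:
  assumes "k < n" "fst w \<in> S" "0 < k \<Longrightarrow> snd w \<in> S" "0\<^sub>m d d \<in> S"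
  shows "lag_symbol k w ` offsets \<subseteq> S"
  using assms by (auto simp: lag_symbol_def offsets_def)

lemma lag_pair_lag_symbol:
  "k < n \<Longrightarrow> p \<in> {1..<n} \<Longrightarrow> lag_pair (lag_symbol k w) p = (if p = k then w else (0\<^sub>m d d, 0\<^sub>m d d))"
  by (auto simp: lag_pair_def lag_symbol_def)

lemma E_op_toep: "E_op n d k (toep n d A) = toep n d (lag_symbol k (lag_pair A k))"
  by (rule eq_matI) (auto simp: E_op_def index_toep lag_symbol_def lag_pair_def block_mod_less)

lemma E_op_toep_lag_symbol: "k < n \<Longrightarrow> E_op n d k (toep n d (lag_symbol k w)) = toep n d (lag_symbol k w)"
  unfolding E_op_toep by (rule arg_cong[where f = "toep n d"]) (auto simp: lag_symbol_def lag_pair_def)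

lemma toep_lag_symbol_ne_zero:
  assumes k: "k < n" and w: "fst w \<in> carrier_mat d d" "snd w \<in> carrier_mat d d"
    and nz: "fst w \<noteq> 0\<^sub>m d d \<or> (0 < k \<and> snd w \<noteq> 0\<^sub>m d d)"
  shows "toep n d (lag_symbol k w) \<noteq> 0\<^sub>m (n*d) (n*d)"
proof
  assume "toep n d (lag_symbol k w) = 0\<^sub>m (n*d) (n*d)"
  then have eq: "toep n d (lag_symbol k w) = toep n d (\<lambda>_. 0\<^sub>m d d)" by (simp add: toep_zero)
  have vanish: "lag_symbol k w m = 0\<^sub>m d d" if "m \<in> offsets" for m
    by (rule toep_eqD[OF eq that]) (use w in \<open>auto simp: lag_symbol_def\<close>)
  have "fst w = 0\<^sub>m d d" using vanish[of "int k"] k by (simp add: offsets_def lag_symbol_def)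
  moreover have "snd w = 0\<^sub>m d d" if "0 < k"
    using vanish[of "int k - int n"] k that by (simp add: offsets_def lag_symbol_def)
  ultimately show False using nz by blast
qed

lemma mat_sum_E_op:
  assumes T: "T \<in> carrier_mat (n*d) (n*d)"
  shows "mat_sum (n*d) (\<lambda>k. E_op n d k T) n = T"
proof -
  have E: "\<And>k. k < n \<Longrightarrow> E_op n d k T \<in> carrier_mat (n*d) (n*d)" by (simp add: E_op_def)
  have S: "mat_sum (n*d) (\<lambda>k. E_op n d k T) n \<in> carrier_mat (n*d) (n*d)"
    using E by (rule mat_sum_carrier)
  show ?thesis
  proof (rule eq_matI)
    fix r c assume "r < dim_row T" "c < dim_col T"
    then have rc: "r < n*d" "c < n*d" using T by auto
    define i j where "i = r div d" and "j = c div d"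
    have "i < n" "j < n" using rc by (simp_all add: i_def j_def less_mult_imp_div_less)
    \<comment> \<open>exactly one \<open>E\<^sub>k\<close> keeps the block \<open>(i, j)\<close>\<close>
    then obtain h where "h < n" and h: "\<And>k. k < n \<Longrightarrow>
        (int i - int j = int k \<or> int i - int j = int k - int n) \<longleftrightarrow> k = h"
    proof (cases "j \<le> i")
      case True
      then show ?thesis using \<open>i < n\<close> by (intro that[of "i - j"]) auto
    next
      case False
      then show ?thesis using \<open>j < n\<close> by (intro that[of "i + n - j"]) auto
    qed
    have "mat_sum (n*d) (\<lambda>k. E_op n d k T) n $$ (r,c) = (\<Sum>k<n. E_op n d k T $$ (r,c))"
      using E rc by (rule index_mat_sum)
    also have "\<dots> = (\<Sum>k<n. if k = h then T $$ (r,c) else 0)"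
      using rc h by (intro sum.cong) (auto simp: E_op_def i_def j_def)
    also have "\<dots> = T $$ (r,c)" using \<open>h < n\<close> by simp
    finally show "mat_sum (n*d) (\<lambda>k. E_op n d k T) n $$ (r,c) = T $$ (r,c)" .
  qed (use S T in auto)
qed

definition permute_offset :: "(nat \<Rightarrow> nat) \<Rightarrow> int \<Rightarrow> int" where
  "permute_offset \<tau> m = (if m = 0 then 0 else if 0 < m then int (\<tau> (nat m))
     else int (\<tau> (nat (m + int n))) - int n)"

lemma permutes_lags:
  assumes "\<tau> permutes {1..n-1}" "p \<in> {1..<n}"
  shows "\<tau> p \<in> {1..<n}"
proof -
  have "p \<in> {1..n-1}" using assms(2) by auto
  then have "\<tau> p \<in> {1..n-1}" using permutes_in_image[OF assms(1)] by blast
  then show ?thesis by auto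
qed

lemma permute_offset_in_offsets:
  assumes \<tau>: "\<tau> permutes {1..n-1}" and m: "m \<in> offsets"
  shows "permute_offset \<tau> m \<in> offsets"
proof -
  consider "m = 0" | "0 < m" | "m < 0" by linarith
  then show ?thesis
  proof cases
    case 1
    with m show ?thesis by (simp add: permute_offset_def)
  next
    case 2
    with m have "nat m \<in> {1..<n}" by (auto simp: offsets_def)
    with 2 show ?thesis using permutes_lags[OF \<tau>] by (force simp: permute_offset_def offsets_def)
  next
    case 3
    with m have "nat (m + int n) \<in> {1..<n}" by (auto simp: offsets_def)
    with 3 show ?thesis using permutes_lags[OF \<tau>] by (force simp: permute_offset_def offsets_def)
  qed
qed

lemma lag_pair_permute_offset:
  "p \<in> {1..<n} \<Longrightarrow> lag_pair (A \<circ> permute_offset \<tau>) p = lag_pair A (\<tau> p)"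
  by (auto simp: lag_pair_def permute_offset_def)

lemma perm_act_toep:
  assumes \<sigma>: "\<sigma> permutes {1..n-1}" and A: "A ` offsets \<subseteq> carrier_mat d d"
  shows "perm_act n d \<sigma> (toep n d A) = toep n d (A \<circ> permute_offset (inv_into UNIV \<sigma>))"
proof -
  have "perm_act n d \<sigma> (toep n d A) = toep n d (toep_symbol d (toep n d A) \<circ> permute_offset (inv_into UNIV \<sigma>))"
    unfolding perm_act_def by (intro arg_cong[where f = "toep n d"] ext) (simp add: permute_offset_def)
  also have "\<dots> = toep n d (A \<circ> permute_offset (inv_into UNIV \<sigma>))"
  proof (rule toep_cong)
    fix m assume "m \<in> offsets"
    then have "permute_offset (inv_into UNIV \<sigma>) m \<in> offsets"
      by (rule permute_offset_in_offsets[OF permutes_inv[OF \<sigma>]])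
    with A show "(toep_symbol d (toep n d A) \<circ> permute_offset (inv_into UNIV \<sigma>)) m
        = (A \<circ> permute_offset (inv_into UNIV \<sigma>)) m"
      by (auto intro: toep_symbol_toep)
  qed
  finally show ?thesis .
qed

subsection \<open>Products of block Toeplitz matrices\<close>

definition block_prod :: "(int \<Rightarrow> complex mat) \<Rightarrow> (int \<Rightarrow> complex mat) \<Rightarrow> nat \<Rightarrow> nat \<Rightarrow> complex mat" where
  "block_prod A B i j = mat_sum d (\<lambda>l. A (int i - int l) * B (int l - int j)) n"

definition prod_symbol :: "(int \<Rightarrow> complex mat) \<Rightarrow> (int \<Rightarrow> complex mat) \<Rightarrow> int \<Rightarrow> complex mat" where
  "prod_symbol A B m = (if 0 \<le> m then block_prod A B (nat m) 0 else block_prod A B 0 (nat (-m)))"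

definition compatible_symbols :: "(int \<Rightarrow> complex mat) \<Rightarrow> (int \<Rightarrow> complex mat) \<Rightarrow> bool" where
  "compatible_symbols A B \<longleftrightarrow> (\<forall>p\<in>{1..<n}. \<forall>q\<in>{1..<n}.
     A (int p) * B (int q - int n) = A (int p - int n) * B (int q))"

lemma toep_mult:
  assumes A: "A ` offsets \<subseteq> carrier_mat d d" and B: "B ` offsets \<subseteq> carrier_mat d d"
  shows "toep n d A * toep n d B =
    mat (n*d) (n*d) (\<lambda>(r,c). block_prod A B (r div d) (c div d) $$ (r mod d, c mod d))" (is "_ = ?M")
proof (rule eq_matI)
  fix r c assume "r < dim_row ?M" "c < dim_col ?M"
  then have rc: "r < n*d" "c < n*d" by auto
  define i j a b where "i = r div d" and "j = c div d" and "a = r mod d" and "b = c mod d"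
  have ij: "i < n" "j < n" "a < d" "b < d"
    using rc by (auto simp: i_def j_def a_def b_def less_mult_imp_div_less block_mod_less)
  have cA: "A (int i - int l) \<in> carrier_mat d d" and cB: "B (int l - int j) \<in> carrier_mat d d"
    if "l < n" for l
    using A B ij that by (auto simp: diff_in_offsets)
  have "(toep n d A * toep n d B) $$ (r,c) = (\<Sum>k<n*d. toep n d A $$ (r,k) * toep n d B $$ (k,c))"
    using rc by (simp add: scalar_prod_def atLeast0LessThan)
  also have "\<dots> = (\<Sum>l<n. \<Sum>e<d. toep n d A $$ (r, l*d + e) * toep n d B $$ (l*d + e, c))"
    by (rule sum_blocks)
  also have "\<dots> = (\<Sum>l<n. \<Sum>e<d. A (int i - int l) $$ (a,e) * B (int l - int j) $$ (e,b))"
    using rc by (intro sum.cong refl)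
      (simp add: index_toep block_index_less block_index_div_mod i_def j_def a_def b_def)
  also have "\<dots> = (\<Sum>l<n. (A (int i - int l) * B (int l - int j)) $$ (a,b))"
  proof (intro sum.cong refl)
    fix l assume "l \<in> {..<n}"
    with cA[of l] cB[of l] ij
    show "(\<Sum>e<d. A (int i - int l) $$ (a,e) * B (int l - int j) $$ (e,b))
        = (A (int i - int l) * B (int l - int j)) $$ (a,b)"
      by (simp add: scalar_prod_def atLeast0LessThan)
  qed
  also have "\<dots> = block_prod A B i j $$ (a,b)"
    unfolding block_prod_def using cA cB ij by (subst index_mat_sum) (auto intro!: mult_carrier_mat)
  finally show "(toep n d A * toep n d B) $$ (r,c) = ?M $$ (r,c)"
    using rc by (simp add: i_def j_def a_def b_def)
qed auto

lemma block_prod_carrier: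
  assumes "A ` offsets \<subseteq> carrier_mat d d" "B ` offsets \<subseteq> carrier_mat d d" "i < n" "j < n"
  shows "block_prod A B i j \<in> carrier_mat d d"
  unfolding block_prod_def using assms
  by (intro mat_sum_carrier mult_carrier_mat) (auto simp: diff_in_offsets)

lemma blk_toep_mult:
  assumes A: "A ` offsets \<subseteq> carrier_mat d d" and B: "B ` offsets \<subseteq> carrier_mat d d"
    and ij: "i < n" "j < n"
  shows "blk d (toep n d A * toep n d B) i j = block_prod A B i j"
proof (rule eq_matI)
  have P: "block_prod A B i j \<in> carrier_mat d d" using assms by (rule block_prod_carrier)
  fix a b assume "a < dim_row (block_prod A B i j)" "b < dim_col (block_prod A B i j)"
  with P have "a < d" "b < d" by auto
  with ij show "blk d (toep n d A * toep n d B) i j $$ (a,b) = block_prod A B i j $$ (a,b)"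
    by (simp add: blk_def toep_mult[OF A B] block_index_less block_index_div_mod)
qed (use block_prod_carrier[OF assms] in \<open>auto simp: blk_def\<close>)

text \<open>The blocks \<open>(i + 1, j + 1)\<close> and \<open>(i, j)\<close> of the product share all summands except the
  first summand of the former and the last summand of the latter.\<close>
lemma block_prod_Suc_Suc_eq_iff:
  assumes A: "A ` offsets \<subseteq> carrier_mat d d" and B: "B ` offsets \<subseteq> carrier_mat d d"
    and ij: "Suc i < n" "Suc j < n"
  shows "block_prod A B (Suc i) (Suc j) = block_prod A B i j \<longleftrightarrow>
    A (int (Suc i)) * B (- int (Suc j)) = A (int (Suc i) - int n) * B (int n - int (Suc j))"
proof -
  have prod: "A x * B y \<in> carrier_mat d d" if "x \<in> offsets" "y \<in> offsets" for x y
    using A B that by (auto intro: mult_carrier_mat)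
  have n: "Suc (n - 1) = n" using ij by simp
  define X where "X = mat_sum d (\<lambda>l. A (int i - int l) * B (int l - int j)) (n - 1)"
  have X: "X \<in> carrier_mat d d"
    unfolding X_def using ij by (intro mat_sum_carrier prod) (auto simp: offsets_def)
  have "block_prod A B (Suc i) (Suc j)
      = mat_sum d (\<lambda>l. A (int (Suc i) - int l) * B (int l - int (Suc j))) (Suc (n - 1))"
    unfolding block_prod_def n ..
  also have "\<dots> = A (int (Suc i)) * B (- int (Suc j)) + X"
    unfolding X_def using ij
    by (subst mat_sum_Suc_shift) (auto intro!: prod simp: offsets_def algebra_simps)
  finally have 1: "block_prod A B (Suc i) (Suc j) = A (int (Suc i)) * B (- int (Suc j)) + X" .
  have "block_prod A B i j
      = mat_sum d (\<lambda>l. A (int i - int l) * B (int l - int j)) (Suc (n - 1))"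
    unfolding block_prod_def n ..
  also have "\<dots> = X + A (int i - int (n - 1)) * B (int (n - 1) - int j)"
    unfolding X_def by (rule mat_sum.simps(2))
  also have "A (int i - int (n - 1)) * B (int (n - 1) - int j)
      = A (int (Suc i) - int n) * B (int n - int (Suc j))"
    using ij by (simp add: of_nat_diff algebra_simps)
  finally have 2: "block_prod A B i j = X + A (int (Suc i) - int n) * B (int n - int (Suc j))" .
  show ?thesis
    unfolding 1 2 using ij by (intro mat_add_comm_cancel[where d = d] X prod) (auto simp: offsets_def)
qed

lemma compatible_symbols_iff:
  assumes A: "A ` offsets \<subseteq> carrier_mat d d" and B: "B ` offsets \<subseteq> carrier_mat d d"
  shows "compatible_symbols A B \<longleftrightarrow>
    (\<forall>i j. Suc i < n \<longrightarrow> Suc j < n \<longrightarrow> block_prod A B (Suc i) (Suc j) = block_prod A B i j)"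
proof -
  have "compatible_symbols A B \<longleftrightarrow> (\<forall>i j. Suc i < n \<longrightarrow> Suc j < n \<longrightarrow>
      A (int (Suc i)) * B (- int (Suc j)) = A (int (Suc i) - int n) * B (int n - int (Suc j)))"
    unfolding compatible_symbols_def
  proof (intro iffI allI impI ballI)
    fix i j assume all: "\<forall>p\<in>{1..<n}. \<forall>q\<in>{1..<n}.
        A (int p) * B (int q - int n) = A (int p - int n) * B (int q)"
      and ij: "Suc i < n" "Suc j < n"
    show "A (int (Suc i)) * B (- int (Suc j)) = A (int (Suc i) - int n) * B (int n - int (Suc j))"
      using all[rule_format, of "Suc i" "n - 1 - j"] ij by (simp add: of_nat_diff algebra_simps)
  next
    fix p q assume all: "\<forall>i j. Suc i < n \<longrightarrow> Suc j < n \<longrightarrow>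
        A (int (Suc i)) * B (- int (Suc j)) = A (int (Suc i) - int n) * B (int n - int (Suc j))"
      and pq: "p \<in> {1..<n}" "q \<in> {1..<n}"
    show "A (int p) * B (int q - int n) = A (int p - int n) * B (int q)"
    proof -
      have "Suc (p - 1) < n" "Suc (n - 1 - q) < n" using pq by auto
      from all[rule_format, OF this] show ?thesis using pq by (simp add: of_nat_diff algebra_simps)
    qed
  qed
  with block_prod_Suc_Suc_eq_iff[OF A B] show ?thesis by auto
qed

lemma block_prod_eq_prod_symbol:
  assumes shift: "\<And>i j. Suc i < n \<Longrightarrow> Suc j < n \<Longrightarrow> block_prod A B (Suc i) (Suc j) = block_prod A B i j"
    and "i < n" "j < n"
  shows "block_prod A B i j = prod_symbol A B (int i - int j)"
proof -
  have diag: "block_prod A B (i + t) (j + t) = block_prod A B i j" if "i + t < n" "j + t < n" for i j t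
    using that by (induction t) (simp_all add: shift)
  show ?thesis
  proof (cases "j \<le> i")
    case True
    have "block_prod A B (i - j + j) (0 + j) = block_prod A B (i - j) 0"
      by (rule diag) (use assms True in auto)
    with True show ?thesis by (simp add: prod_symbol_def nat_diff_distrib)
  next
    case False
    have "block_prod A B (0 + i) (j - i + i) = block_prod A B 0 (j - i)"
      by (rule diag) (use assms False in auto)
    with False show ?thesis by (simp add: prod_symbol_def nat_diff_distrib)
  qed
qed

lemma toep_mult_toep:
  assumes A: "A ` offsets \<subseteq> carrier_mat d d" and B: "B ` offsets \<subseteq> carrier_mat d d"
    and "compatible_symbols A B"
  shows "toep n d A * toep n d B = toep n d (prod_symbol A B)"
proof -
  have shift: "\<And>i j. Suc i < n \<Longrightarrow> Suc j < n \<Longrightarrow> block_prod A B (Suc i) (Suc j) = block_prod A B i j"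
    using assms compatible_symbols_iff by blast
  show ?thesis unfolding toep_mult[OF A B]
    by (rule eq_matI)
      (auto simp: index_toep block_prod_eq_prod_symbol[OF shift] less_mult_imp_div_less)
qed

lemma toep_mult_eq_toep_imp_compatible:
  assumes A: "A ` offsets \<subseteq> carrier_mat d d" and B: "B ` offsets \<subseteq> carrier_mat d d"
    and C: "C ` offsets \<subseteq> carrier_mat d d"
    and eq: "toep n d A * toep n d B = toep n d C"
  shows "compatible_symbols A B"
proof -
  have blocks: "block_prod A B i j = C (int i - int j)" if "i < n" "j < n" for i j
    using blk_toep_mult[OF A B that] blk_toep[OF that] C that
    by (simp add: eq image_subset_iff diff_in_offsets)
  show ?thesis unfolding compatible_symbols_iff[OF A B] by (simp add: blocks)
qed

text \<open>The wrap-around block is reindexed by \<open>l \<mapsto> l + n - m (mod n)\<close>, so that its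
  terms line up with those of the block at lag \<open>m\<close>.\<close>
lemma lag_pair_prod_symbol_eq:
  assumes A: "A ` offsets \<subseteq> carrier_mat d d" and B: "B ` offsets \<subseteq> carrier_mat d d"
    and m: "m \<in> {1..<n}"
  shows "lag_pair (prod_symbol A B) m =
    (mat_sum d (\<lambda>l. A (int m - int l) * B (int l)) n,
     mat_sum d (\<lambda>l. if l < m then A (int m - int l - int n) * B (int l)
                    else A (int m - int l) * B (int l - int n)) n)"
proof -
  define g where "g l = (if l < m then A (int m - int l - int n) * B (int l)
                         else A (int m - int l) * B (int l - int n))" for l
  define h where "h l = A (- int l) * B (int l - int (n - m))" for l
  have "prod_symbol A B (int m - int n) = mat_sum d h n"
    unfolding prod_symbol_def block_prod_def h_def using m by (simp add: nat_diff_distrib)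
  also have "\<dots> = mat_sum d g n"
  proof (rule mat_sum_reindex[symmetric])
    show "bij_betw (\<lambda>l. if l < m then l + n - m else l - m) {..<n} {..<n}"
      using m by (intro bij_betw_rotate_lessThan) simp
    fix l assume "l < n"
    show "h (if l < m then l + n - m else l - m) = g l"
    proof (cases "l < m")
      case True
      then have "h (l + n - m) = A (int m - int l - int n) * B (int l)"
        unfolding h_def by (intro arg_cong2[where f = "\<lambda>x y. A x * B y"]) (use m in auto)
      with True show ?thesis by (simp add: g_def)
    next
      case False
      then have "h (l - m) = A (int m - int l) * B (int l - int n)"
        unfolding h_def by (intro arg_cong2[where f = "\<lambda>x y. A x * B y"]) (use m in auto)
      with False show ?thesis by (simp add: g_def)
    qed
    show "g l \<in> carrier_mat d d"
      using \<open>l < n\<close> m A B by (auto intro!: mult_carrier_mat simp: g_def offsets_def image_subset_iff)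
  qed
  finally show ?thesis
    unfolding lag_pair_def g_def by (simp add: prod_symbol_def block_prod_def)
qed

end

section \<open>Toeplitz algebras attached to modules of lag pairs\<close>

locale toeplitz_over_comm = block_toeplitz +
  fixes \<A> :: "complex mat set"
  assumes n_ge_2: "2 \<le> n" and d_pos: "0 < d"
    and comm_subalg: "comm_mat_subalg d \<A>" and one_mem: "1\<^sub>m d \<in> \<A>"
begin

lemma subset_carrier: "\<A> \<subseteq> carrier_mat d d"
  and zero_mem: "0\<^sub>m d d \<in> \<A>"
  and add_mem: "X \<in> \<A> \<Longrightarrow> Y \<in> \<A> \<Longrightarrow> X + Y \<in> \<A>"
  and smult_mem: "X \<in> \<A> \<Longrightarrow> c \<cdot>\<^sub>m X \<in> \<A>"
  and mult_mem: "X \<in> \<A> \<Longrightarrow> Y \<in> \<A> \<Longrightarrow> X * Y \<in> \<A>"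
  and mult_comm: "X \<in> \<A> \<Longrightarrow> Y \<in> \<A> \<Longrightarrow> X * Y = Y * X"
  using comm_subalg unfolding comm_mat_subalg_def mat_subalg_def mat_subspace_def by auto

lemma symbol_carrier: "A ` offsets \<subseteq> \<A> \<Longrightarrow> A ` offsets \<subseteq> carrier_mat d d"
  using subset_carrier by blast

definition compatible_module :: "(complex mat \<times> complex mat) set \<Rightarrow> bool" where
  "compatible_module W \<longleftrightarrow> W \<subseteq> \<A> \<times> \<A> \<and> (0\<^sub>m d d, 0\<^sub>m d d) \<in> W
     \<and> (\<forall>(x, y)\<in>W. \<forall>(x', y')\<in>W. (x + x', y + y') \<in> W)
     \<and> (\<forall>c\<in>\<A>. \<forall>(x, y)\<in>W. (c * x, c * y) \<in> W)
     \<and> (\<forall>(x, y)\<in>W. \<forall>(x', y')\<in>W. x * y' = y * x')"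

lemma compatible_moduleD:
  assumes "compatible_module W"
  shows "W \<subseteq> \<A> \<times> \<A>" "(0\<^sub>m d d, 0\<^sub>m d d) \<in> W"
    and "(x, y) \<in> W \<Longrightarrow> (x', y') \<in> W \<Longrightarrow> (x + x', y + y') \<in> W"
    and "c \<in> \<A> \<Longrightarrow> (x, y) \<in> W \<Longrightarrow> (c * x, c * y) \<in> W"
    and "(x, y) \<in> W \<Longrightarrow> (x', y') \<in> W \<Longrightarrow> x * y' = y * x'"
  using assms unfolding compatible_module_def by fast+

lemma compatible_moduleI:
  assumes "W \<subseteq> \<A> \<times> \<A>" "(0\<^sub>m d d, 0\<^sub>m d d) \<in> W"
    and "\<And>x y x' y'. (x, y) \<in> W \<Longrightarrow> (x', y') \<in> W \<Longrightarrow> (x + x', y + y') \<in> W"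
    and "\<And>c x y. c \<in> \<A> \<Longrightarrow> (x, y) \<in> W \<Longrightarrow> (c * x, c * y) \<in> W"
    and "\<And>x y x' y'. (x, y) \<in> W \<Longrightarrow> (x', y') \<in> W \<Longrightarrow> x * y' = y * x'"
  shows "compatible_module W"
  using assms unfolding compatible_module_def by auto

lemma compatible_module_Times_zero: "compatible_module (\<A> \<times> {0\<^sub>m d d :: complex mat})"
proof (rule compatible_moduleI)
  show "\<A> \<times> {0\<^sub>m d d :: complex mat} \<subseteq> \<A> \<times> \<A>" "(0\<^sub>m d d, 0\<^sub>m d d) \<in> \<A> \<times> {0\<^sub>m d d :: complex mat}" using zero_mem by auto
  fix x y x' y' assume "(x, y) \<in> \<A> \<times> {0\<^sub>m d d :: complex mat}" "(x', y') \<in> \<A> \<times> {0\<^sub>m d d :: complex mat}"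
  moreover from this have "x \<in> carrier_mat d d" "x' \<in> carrier_mat d d" using subset_carrier by auto
  ultimately show "(x + x', y + y') \<in> \<A> \<times> {0\<^sub>m d d :: complex mat}" "x * y' = y * x'" by (auto intro: add_mem)
next
  fix c x y assume "c \<in> \<A>" "(x, y) \<in> \<A> \<times> {0\<^sub>m d d :: complex mat}"
  moreover from this have "c \<in> carrier_mat d d" using subset_carrier by auto
  ultimately show "(c * x, c * y) \<in> \<A> \<times> {0\<^sub>m d d :: complex mat}" by (auto intro: mult_mem)
qed

definition toep_alg :: "(complex mat \<times> complex mat) set \<Rightarrow> complex mat set" where
  "toep_alg W = {toep n d A | A. A ` offsets \<subseteq> \<A> \<and> (\<forall>p\<in>{1..<n}. lag_pair A p \<in> W)}"

lemma toep_in_toep_alg: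
  "A ` offsets \<subseteq> \<A> \<Longrightarrow> (\<And>p. p \<in> {1..<n} \<Longrightarrow> lag_pair A p \<in> W) \<Longrightarrow> toep n d A \<in> toep_alg W"
  unfolding toep_alg_def by blast

lemma toep_algE:
  assumes "X \<in> toep_alg W"
  obtains A where "X = toep n d A" "A ` offsets \<subseteq> \<A>" "\<And>p. p \<in> {1..<n} \<Longrightarrow> lag_pair A p \<in> W"
proof -
  from assms obtain A where "X = toep n d A" "A ` offsets \<subseteq> \<A>" "\<forall>p\<in>{1..<n}. lag_pair A p \<in> W"
    unfolding toep_alg_def by blast
  then show thesis by (intro that) auto
qed

lemma toep_alg_subset: "toep_alg W \<subseteq> toeplitz_set n d \<A>"
  unfolding toep_alg_def toeplitz_set_eq by blast

lemma prod_symbol_range: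
  assumes "A ` offsets \<subseteq> \<A>" "B ` offsets \<subseteq> \<A>"
  shows "prod_symbol A B ` offsets \<subseteq> \<A>"
proof -
  have "block_prod A B i j \<in> \<A>" if "i < n" "j < n" for i j
    unfolding block_prod_def using assms that
    by (intro mat_sum_closed zero_mem add_mem mult_mem) (auto simp: image_subset_iff diff_in_offsets)
  then show ?thesis by (auto simp: prod_symbol_def offsets_def)
qed

text \<open>Corresponding terms of the two sums are \<open>\<A>\<close>-multiples of a lag pair of \<open>A\<close>
  (for \<open>l < m\<close>) or of \<open>B\<close> (for \<open>l \<ge> m\<close>).\<close>
lemma lag_pair_prod_symbol:
  assumes W: "compatible_module W"
    and A: "A ` offsets \<subseteq> \<A>" "\<And>p. p \<in> {1..<n} \<Longrightarrow> lag_pair A p \<in> W"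
    and B: "B ` offsets \<subseteq> \<A>" "\<And>p. p \<in> {1..<n} \<Longrightarrow> lag_pair B p \<in> W"
    and m: "m \<in> {1..<n}"
  shows "lag_pair (prod_symbol A B) m \<in> W"
  unfolding lag_pair_prod_symbol_eq[OF symbol_carrier[OF A(1)] symbol_carrier[OF B(1)] m]
proof (intro mat_sum_pair_closed compatible_moduleD[OF W])
  fix l assume "l < n"
  show "(A (int m - int l) * B (int l), if l < m then A (int m - int l - int n) * B (int l)
      else A (int m - int l) * B (int l - int n)) \<in> W"
  proof (cases "l < m")
    case True
    then have p: "m - l \<in> {1..<n}" and "int (m - l) = int m - int l" using m by auto
    moreover have "B (int l) \<in> \<A>" using B(1) \<open>l < n\<close> by (auto simp: offsets_def)
    moreover have "A (int m - int l) \<in> \<A>" "A (int m - int l - int n) \<in> \<A>"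
      using A(1) m True by (auto simp: offsets_def)
    ultimately show ?thesis
      using compatible_moduleD(4)[OF W _ A(2)[OF p, unfolded lag_pair_def]] True
      by (simp add: mult_comm[of "A (int m - int l)" "B (int l)"]
          mult_comm[of "A (int m - int l - int n)" "B (int l)"])
  next
    case False
    then have p: "l \<in> {1..<n}" using m \<open>l < n\<close> by auto
    have "A (int m - int l) \<in> \<A>" using A(1) m \<open>l < n\<close> by (auto simp: offsets_def)
    then show ?thesis
      using compatible_moduleD(4)[OF W _ B(2)[OF p, unfolded lag_pair_def]] False by simp
  qed
qed

lemma toep_alg_add:
  assumes W: "compatible_module W" and "X \<in> toep_alg W" "Y \<in> toep_alg W"
  shows "X + Y \<in> toep_alg W"
proof -
  obtain A where X: "X = toep n d A"
    and A: "A ` offsets \<subseteq> \<A>" "\<And>p. p \<in> {1..<n} \<Longrightarrow> lag_pair A p \<in> W"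
    using \<open>X \<in> toep_alg W\<close> by (elim toep_algE) blast
  obtain B where Y: "Y = toep n d B"
    and B: "B ` offsets \<subseteq> \<A>" "\<And>p. p \<in> {1..<n} \<Longrightarrow> lag_pair B p \<in> W"
    using \<open>Y \<in> toep_alg W\<close> by (elim toep_algE) blast
  have "toep n d (\<lambda>m. A m + B m) \<in> toep_alg W"
  proof (rule toep_in_toep_alg)
    show "(\<lambda>m. A m + B m) ` offsets \<subseteq> \<A>" using A(1) B(1) by (auto intro: add_mem)
    fix p assume "p \<in> {1..<n}"
    from compatible_moduleD(3)[OF W A(2)[OF this, unfolded lag_pair_def] B(2)[OF this, unfolded lag_pair_def]]
    show "lag_pair (\<lambda>m. A m + B m) p \<in> W" by (simp add: lag_pair_def)
  qed
  then show ?thesis unfolding X Y using toep_add[OF symbol_carrier[OF B(1)]] by simp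
qed

lemma toep_alg_mult:
  assumes W: "compatible_module W" and "X \<in> toep_alg W" "Y \<in> toep_alg W"
  shows "X * Y \<in> toep_alg W"
proof -
  obtain A where X: "X = toep n d A"
    and A: "A ` offsets \<subseteq> \<A>" "\<And>p. p \<in> {1..<n} \<Longrightarrow> lag_pair A p \<in> W"
    using \<open>X \<in> toep_alg W\<close> by (elim toep_algE) blast
  obtain B where Y: "Y = toep n d B"
    and B: "B ` offsets \<subseteq> \<A>" "\<And>p. p \<in> {1..<n} \<Longrightarrow> lag_pair B p \<in> W"
    using \<open>Y \<in> toep_alg W\<close> by (elim toep_algE) blast
  have "compatible_symbols A B"
    unfolding compatible_symbols_def
  proof (intro ballI)
    fix p q assume "p \<in> {1..<n}" "q \<in> {1..<n}"
    from compatible_moduleD(5)[OF W A(2)[OF this(1), unfolded lag_pair_def] B(2)[OF this(2), unfolded lag_pair_def]]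
    show "A (int p) * B (int q - int n) = A (int p - int n) * B (int q)" .
  qed
  then have "X * Y = toep n d (prod_symbol A B)"
    unfolding X Y using symbol_carrier[OF A(1)] symbol_carrier[OF B(1)] by (intro toep_mult_toep)
  moreover have "toep n d (prod_symbol A B) \<in> toep_alg W"
    using prod_symbol_range[OF A(1) B(1)] lag_pair_prod_symbol[OF W A B] by (rule toep_in_toep_alg)
  ultimately show ?thesis by simp
qed

lemma toep_alg_smult:
  assumes W: "compatible_module W" and "X \<in> toep_alg W"
  shows "c \<cdot>\<^sub>m X \<in> toep_alg W"
proof -
  obtain A where X: "X = toep n d A"
    and A: "A ` offsets \<subseteq> \<A>" "\<And>p. p \<in> {1..<n} \<Longrightarrow> lag_pair A p \<in> W"
    using \<open>X \<in> toep_alg W\<close> by (elim toep_algE) blast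
  have "toep n d (\<lambda>m. c \<cdot>\<^sub>m A m) \<in> toep_alg W"
  proof (rule toep_in_toep_alg)
    show "(\<lambda>m. c \<cdot>\<^sub>m A m) ` offsets \<subseteq> \<A>" using A(1) by (auto intro: smult_mem)
    fix p assume p: "p \<in> {1..<n}"
    \<comment> \<open>scalars act through the identity, which lies in \<open>\<A>\<close>\<close>
    have scalar: "(c \<cdot>\<^sub>m 1\<^sub>m d) * Z = c \<cdot>\<^sub>m Z" if "Z \<in> \<A>" for Z
      using that subset_carrier mult_smult_assoc_mat[of "1\<^sub>m d" d d Z d c] by auto
    have "A (int p) \<in> \<A>" "A (int p - int n) \<in> \<A>"
      using compatible_moduleD(1)[OF W] A(2)[OF p] by (auto simp: lag_pair_def)
    with compatible_moduleD(4)[OF W smult_mem[OF one_mem, of c] A(2)[OF p, unfolded lag_pair_def]]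
    show "lag_pair (\<lambda>m. c \<cdot>\<^sub>m A m) p \<in> W" by (simp add: lag_pair_def scalar)
  qed
  then show ?thesis unfolding X using toep_smult[OF symbol_carrier[OF A(1)]] by simp
qed

lemma toep_alg_subalg:
  assumes W: "compatible_module W"
  shows "mat_subalg (n*d) (toep_alg W)"
proof -
  have "toep n d (\<lambda>_. 0\<^sub>m d d) \<in> toep_alg W"
    using zero_mem compatible_moduleD(2)[OF W] by (intro toep_in_toep_alg) (auto simp: lag_pair_def)
  then show ?thesis
    unfolding mat_subalg_def mat_subspace_def
    using toep_alg_add[OF W] toep_alg_mult[OF W] toep_alg_smult[OF W]
    by (auto simp: toep_zero toep_alg_def)
qed

inductive_set module_gen :: "(complex mat \<times> complex mat) set \<Rightarrow> (complex mat \<times> complex mat) set"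
  for V :: "(complex mat \<times> complex mat) set" where
  base: "(x, y) \<in> V \<Longrightarrow> (x, y) \<in> module_gen V"
| zero: "(0\<^sub>m d d, 0\<^sub>m d d) \<in> module_gen V"
| add: "(x, y) \<in> module_gen V \<Longrightarrow> (x', y') \<in> module_gen V \<Longrightarrow> (x + x', y + y') \<in> module_gen V"
| mult: "c \<in> \<A> \<Longrightarrow> (x, y) \<in> module_gen V \<Longrightarrow> (c * x, c * y) \<in> module_gen V"

lemma module_gen_subset:
  assumes "V \<subseteq> \<A> \<times> \<A>"
  shows "module_gen V \<subseteq> \<A> \<times> \<A>"
proof -
  have "x \<in> \<A> \<and> y \<in> \<A>" if "(x, y) \<in> module_gen V" for x y
    using that by (induction rule: module_gen.induct) (use assms in \<open>auto intro: zero_mem add_mem mult_mem\<close>)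
  then show ?thesis by auto
qed

lemma cross_comm_module_gen:
  assumes V: "V \<subseteq> \<A> \<times> \<A>" and u: "u \<in> \<A>" and v: "v \<in> \<A>"
    and uv: "\<And>x y. (x, y) \<in> V \<Longrightarrow> u * y = v * x"
    and w: "(x, y) \<in> module_gen V"
  shows "u * y = v * x"
  using w
proof (induction rule: module_gen.induct)
  case (base x y)
  then show ?case by (rule uv)
next
  case zero
  have "u \<in> carrier_mat d d" "v \<in> carrier_mat d d" using u v subset_carrier by auto
  then show ?case by simp
next
  case (add x y x' y')
  then have "x \<in> \<A>" "y \<in> \<A>" "x' \<in> \<A>" "y' \<in> \<A>"
    using module_gen_subset[OF V] by auto
  with u v subset_carrier have "u * (y + y') = u * y + u * y'" "v * (x + x') = v * x + v * x'"
    by (auto intro: mult_add_distrib_mat)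
  with add.IH show ?case by simp
next
  case (mult c x y)
  then have "x \<in> \<A>" "y \<in> \<A>" using module_gen_subset[OF V] by auto
  with mult(1) u v subset_carrier
  have car: "u \<in> carrier_mat d d" "v \<in> carrier_mat d d" "c \<in> carrier_mat d d"
    "x \<in> carrier_mat d d" "y \<in> carrier_mat d d" by auto
  have "u * (c * y) = (u * c) * y" using car by (simp add: assoc_mult_mat[of u d d c d y d])
  also have "\<dots> = c * (u * y)"
    using car mult_comm[OF u mult(1)] by (simp add: assoc_mult_mat[of c d d u d y d])
  also have "\<dots> = c * (v * x)" using mult.IH by simp
  also have "\<dots> = (v * c) * x"
    using car mult_comm[OF v mult(1)] by (simp add: assoc_mult_mat[of c d d v d x d])
  also have "\<dots> = v * (c * x)" using car by (simp add: assoc_mult_mat[of v d d c d x d])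
  finally show ?case .
qed

lemma compatible_module_gen:
  assumes V: "V \<subseteq> \<A> \<times> \<A>"
    and cross: "\<And>x y x' y'. (x, y) \<in> V \<Longrightarrow> (x', y') \<in> V \<Longrightarrow> x * y' = y * x'"
  shows "compatible_module (module_gen V)"
proof (rule compatible_moduleI)
  show gen: "module_gen V \<subseteq> \<A> \<times> \<A>" using V by (rule module_gen_subset)
  show "(0\<^sub>m d d, 0\<^sub>m d d) \<in> module_gen V" by (rule module_gen.zero)
  fix x y x' y' assume w: "(x, y) \<in> module_gen V" and w': "(x', y') \<in> module_gen V"
  then show "(x + x', y + y') \<in> module_gen V" by (rule module_gen.add)
  have x'y': "x' \<in> \<A>" "y' \<in> \<A>" and xy: "x \<in> \<A>" "y \<in> \<A>" using gen w w' by auto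
  have "x' * v = y' * u" if uv: "(u, v) \<in> V" for u v
  proof -
    have "u \<in> \<A>" "v \<in> \<A>" using uv V by auto
    moreover have "u * y' = v * x'"
      by (rule cross_comm_module_gen[OF V \<open>u \<in> \<A>\<close> \<open>v \<in> \<A>\<close> _ w']) (use uv cross in blast)
    ultimately show ?thesis using x'y' by (simp add: mult_comm[of x' v] mult_comm[of y' u])
  qed
  then have "x' * y = y' * x" by (rule cross_comm_module_gen[OF V x'y' _ w])
  then show "x * y' = y * x'" using xy x'y' by (simp add: mult_comm[of x y'] mult_comm[of y x'])
next
  fix c x y assume "c \<in> \<A>" "(x, y) \<in> module_gen V"
  then show "(c * x, c * y) \<in> module_gen V" by (rule module_gen.mult)
qed

end

section \<open>Maximal block Toeplitz subalgebras\<close>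

locale maximal_toeplitz_subalg = toeplitz_over_comm +
  fixes \<B> :: "complex mat set"
  assumes maximal: "maximal_subalg_in (n*d) (toeplitz_set n d \<A>) \<B>"
begin

lemma subalg: "mat_subalg (n*d) \<B>"
  and subset_toeplitz: "\<B> \<subseteq> toeplitz_set n d \<A>"
  and eq_if_subalg_between: "mat_subalg (n*d) S \<Longrightarrow> \<B> \<subseteq> S \<Longrightarrow> S \<subseteq> toeplitz_set n d \<A> \<Longrightarrow> S = \<B>"
  using maximal unfolding maximal_subalg_in_def by auto

lemma memE:
  assumes "X \<in> \<B>"
  obtains A where "X = toep n d A" "A ` offsets \<subseteq> \<A>"
  using assms subset_toeplitz unfolding toeplitz_set_eq by blast

definition lag_module :: "(complex mat \<times> complex mat) set" where
  "lag_module = module_gen {lag_pair A p | A p. toep n d A \<in> \<B> \<and> A ` offsets \<subseteq> \<A> \<and> p \<in> {1..<n}}"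

lemma lag_pair_in_lag_module:
  assumes "toep n d A \<in> \<B>" "A ` offsets \<subseteq> \<A>" "p \<in> {1..<n}"
  shows "lag_pair A p \<in> lag_module"
proof -
  have "(A (int p), A (int p - int n)) \<in> {lag_pair A p | A p. toep n d A \<in> \<B> \<and> A ` offsets \<subseteq> \<A> \<and> p \<in> {1..<n}}"
    using assms unfolding lag_pair_def by blast
  then show ?thesis unfolding lag_module_def lag_pair_def by (rule module_gen.base)
qed

lemma lag_module_compatible: "compatible_module lag_module"
  unfolding lag_module_def
proof (rule compatible_module_gen)
  show "{lag_pair A p | A p. toep n d A \<in> \<B> \<and> A ` offsets \<subseteq> \<A> \<and> p \<in> {1..<n}} \<subseteq> \<A> \<times> \<A>"
    by (auto simp: lag_pair_def offsets_def)
  fix x y x' y'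
  assume "(x, y) \<in> {lag_pair A p | A p. toep n d A \<in> \<B> \<and> A ` offsets \<subseteq> \<A> \<and> p \<in> {1..<n}}"
    and "(x', y') \<in> {lag_pair A p | A p. toep n d A \<in> \<B> \<and> A ` offsets \<subseteq> \<A> \<and> p \<in> {1..<n}}"
  then obtain A p B q where xy: "(x, y) = lag_pair A p" "(x', y') = lag_pair B q"
    and A: "toep n d A \<in> \<B>" "A ` offsets \<subseteq> \<A>" and B: "toep n d B \<in> \<B>" "B ` offsets \<subseteq> \<A>"
    and pq: "p \<in> {1..<n}" "q \<in> {1..<n}"
    by blast
  have "toep n d A * toep n d B \<in> toeplitz_set n d \<A>"
    using subalg A(1) B(1) subset_toeplitz unfolding mat_subalg_def by blast
  then obtain C where "toep n d A * toep n d B = toep n d C" "C ` offsets \<subseteq> \<A>"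
    unfolding toeplitz_set_eq by blast
  then have "compatible_symbols A B"
    using symbol_carrier A(2) B(2) by (intro toep_mult_eq_toep_imp_compatible) auto
  then show "x * y' = y * x'" using xy pq by (auto simp: compatible_symbols_def lag_pair_def)
qed

lemma eq_toep_alg: "\<B> = toep_alg lag_module"
proof (rule eq_if_subalg_between[symmetric])
  show "mat_subalg (n*d) (toep_alg lag_module)" using lag_module_compatible by (rule toep_alg_subalg)
  show "toep_alg lag_module \<subseteq> toeplitz_set n d \<A>" by (rule toep_alg_subset)
  show "\<B> \<subseteq> toep_alg lag_module"
  proof
    fix X assume "X \<in> \<B>"
    then obtain A where "X = toep n d A" "A ` offsets \<subseteq> \<A>" by (rule memE)
    with \<open>X \<in> \<B>\<close> show "X \<in> toep_alg lag_module"
      by (auto intro: toep_in_toep_alg lag_pair_in_lag_module)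
  qed
qed

lemma toep_mem_iff:
  assumes "A ` offsets \<subseteq> \<A>"
  shows "toep n d A \<in> \<B> \<longleftrightarrow> (\<forall>p\<in>{1..<n}. lag_pair A p \<in> lag_module)"
proof
  assume "\<forall>p\<in>{1..<n}. lag_pair A p \<in> lag_module"
  then have "toep n d A \<in> toep_alg lag_module" using assms by (intro toep_in_toep_alg) auto
  then show "toep n d A \<in> \<B>" using eq_toep_alg by simp
qed (use assms lag_pair_in_lag_module in blast)

lemma toep_lag_symbol_mem:
  assumes "k < n" "fst w \<in> \<A>" "0 < k \<Longrightarrow> w \<in> lag_module"
  shows "toep n d (lag_symbol k w) \<in> \<B>"
proof -
  have "snd w \<in> \<A>" if "0 < k"
    using assms(3)[OF that] compatible_moduleD(1)[OF lag_module_compatible] by auto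
  then have "lag_symbol k w ` offsets \<subseteq> \<A>"
    using assms(1,2) zero_mem by (intro lag_symbol_range) auto
  moreover have "lag_pair (lag_symbol k w) p \<in> lag_module" if "p \<in> {1..<n}" for p
    using that assms(1,3) lag_pair_lag_symbol[OF assms(1) that]
      compatible_moduleD(2)[OF lag_module_compatible] by auto
  ultimately show ?thesis by (simp add: toep_mem_iff)
qed

lemma diag_toeplitz_subset: "diag_toeplitz_set n d \<A> \<subseteq> \<B>"
proof
  fix X assume "X \<in> diag_toeplitz_set n d \<A>"
  then obtain A where X: "X = toep n d A" and A: "A ` offsets \<subseteq> \<A>"
    and diag: "\<And>m. m \<in> offsets \<Longrightarrow> m \<noteq> 0 \<Longrightarrow> A m = 0\<^sub>m d d"
    unfolding diag_toeplitz_set_def offsets_def by blast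
  have "lag_pair A p = (0\<^sub>m d d, 0\<^sub>m d d)" if "p \<in> {1..<n}" for p
    using that diag by (auto simp: lag_pair_def offsets_def)
  then show "X \<in> \<B>"
    unfolding X toep_mem_iff[OF A] using compatible_moduleD(2)[OF lag_module_compatible] by simp
qed

lemma E_op_mem:
  assumes "X \<in> \<B>" "k < n"
  shows "E_op n d k X \<in> \<B>"
proof -
  obtain A where X: "X = toep n d A" and A: "A ` offsets \<subseteq> \<A>" using assms(1) by (rule memE)
  have "A (int k) \<in> \<A>" using A assms(2) by (auto simp: offsets_def)
  moreover have "lag_pair A k \<in> lag_module" if "0 < k"
    using assms X A that by (intro lag_pair_in_lag_module) auto
  ultimately show ?thesis
    unfolding X E_op_toep using assms(2) by (intro toep_lag_symbol_mem) (auto simp: lag_pair_def)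
qed

lemma eq_span_E_op: "\<B> = mat_span (n*d) (\<Union>k<n. E_op n d k ` \<B>)"
proof
  show "mat_span (n*d) (\<Union>k<n. E_op n d k ` \<B>) \<subseteq> \<B>"
    unfolding mat_span_def using subalg E_op_mem by (intro Inter_lower) (auto simp: mat_subalg_def)
  show "\<B> \<subseteq> mat_span (n*d) (\<Union>k<n. E_op n d k ` \<B>)"
  proof
    fix X assume X: "X \<in> \<B>"
    have "X \<in> S" if "mat_subspace (n*d) S" "(\<Union>k<n. E_op n d k ` \<B>) \<subseteq> S" for S
    proof -
      have "X \<in> carrier_mat (n*d) (n*d)" using X subalg by (auto simp: mat_subalg_def mat_subspace_def)
      then have "X = mat_sum (n*d) (\<lambda>k. E_op n d k X) n" by (simp add: mat_sum_E_op)
      also have "\<dots> \<in> S" using that X by (intro mat_sum_closed) (auto simp: mat_subspace_def)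
      finally show ?thesis .
    qed
    then show "X \<in> mat_span (n*d) (\<Union>k<n. E_op n d k ` \<B>)" unfolding mat_span_def by blast
  qed
qed

lemma perm_act_mem:
  assumes \<sigma>: "\<sigma> permutes {1..n-1}" and "X \<in> \<B>"
  shows "perm_act n d \<sigma> X \<in> \<B>"
proof -
  obtain A where X: "X = toep n d A" and A: "A ` offsets \<subseteq> \<A>" using assms(2) by (rule memE)
  have \<tau>: "inv_into UNIV \<sigma> permutes {1..n-1}" using \<sigma> by (rule permutes_inv)
  have "(A \<circ> permute_offset (inv_into UNIV \<sigma>)) ` offsets \<subseteq> \<A>"
    using A permute_offset_in_offsets[OF \<tau>] by auto
  moreover have "lag_pair A (inv_into UNIV \<sigma> p) \<in> lag_module" if "p \<in> {1..<n}" for p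
    using assms(2) A permutes_lags[OF \<tau> that] unfolding X by (intro lag_pair_in_lag_module)
  ultimately show ?thesis
    unfolding X perm_act_toep[OF \<sigma> symbol_carrier[OF A]]
    by (simp add: toep_mem_iff lag_pair_permute_offset)
qed

text \<open>If all lag pairs of \<open>\<B>\<close> vanished, \<open>\<B>\<close> would sit inside the strictly larger
  algebra attached to \<open>\<A> \<times> {0}\<close>, contradicting maximality.\<close>
lemma lag_module_nontrivial: "\<exists>w\<in>lag_module. w \<noteq> (0\<^sub>m d d, 0\<^sub>m d d)"
proof (rule ccontr)
  assume "\<not> ?thesis"
  then have trivial: "w = (0\<^sub>m d d, 0\<^sub>m d d)" if "w \<in> lag_module" for w using that by blast
  define W where "W = \<A> \<times> {0\<^sub>m d d :: complex mat}"
  have W: "compatible_module W" unfolding W_def by (rule compatible_module_Times_zero)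
  have "\<B> \<subseteq> toep_alg W"
  proof
    fix X assume "X \<in> \<B>"
    then obtain A where X: "X = toep n d A" and A: "A ` offsets \<subseteq> \<A>" by (rule memE)
    have "lag_pair A p \<in> W" if "p \<in> {1..<n}" for p
      using trivial[OF lag_pair_in_lag_module[OF _ A that]] \<open>X \<in> \<B>\<close> X zero_mem by (simp add: W_def)
    with A show "X \<in> toep_alg W" unfolding X by (rule toep_in_toep_alg)
  qed
  then have eq: "toep_alg W = \<B>"
    using toep_alg_subalg[OF W] toep_alg_subset by (intro eq_if_subalg_between)
  have one: "1 \<in> {1..<n}" using n_ge_2 by auto
  have sym: "lag_symbol 1 (1\<^sub>m d, 0\<^sub>m d d) ` offsets \<subseteq> \<A>"
    by (rule lag_symbol_range) (use n_ge_2 one_mem zero_mem in auto)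
  have pairs: "lag_pair (lag_symbol 1 (1\<^sub>m d, 0\<^sub>m d d)) p = (if p = 1 then (1\<^sub>m d, 0\<^sub>m d d) else (0\<^sub>m d d, 0\<^sub>m d d))"
    if "p \<in> {1..<n}" for p
    using lag_pair_lag_symbol[OF _ that, of 1] n_ge_2 by simp
  have "toep n d (lag_symbol 1 (1\<^sub>m d, 0\<^sub>m d d)) \<in> toep_alg W"
    using sym by (rule toep_in_toep_alg) (use pairs one_mem zero_mem in \<open>simp add: W_def\<close>)
  then have "lag_pair (lag_symbol 1 (1\<^sub>m d, 0\<^sub>m d d)) 1 \<in> lag_module"
    unfolding eq using sym one by (rule lag_pair_in_lag_module)
  then have "(1\<^sub>m d, 0\<^sub>m d d) \<in> lag_module" using pairs[OF one] by simp
  then have "(1\<^sub>m d, 0\<^sub>m d d) = (0\<^sub>m d d :: complex mat, 0\<^sub>m d d :: complex mat)" by (rule trivial)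
  then show False using one_mat_neq_zero_mat[OF d_pos, where 'a = complex] by simp
qed

lemma E_op_image_ne_zero:
  assumes k: "k < n"
  shows "E_op n d k ` \<B> \<noteq> {0\<^sub>m (n*d) (n*d)}"
proof -
  obtain w where w: "fst w \<in> \<A>" "snd w \<in> \<A>" "0 < k \<Longrightarrow> w \<in> lag_module"
    and nz: "fst w \<noteq> 0\<^sub>m d d \<or> (0 < k \<and> snd w \<noteq> 0\<^sub>m d d)"
  proof (cases "k = 0")
    case True
    have "(1\<^sub>m d :: complex mat) \<noteq> 0\<^sub>m d d" using d_pos by (rule one_mat_neq_zero_mat)
    with True one_mem zero_mem show ?thesis by (intro that[of "(1\<^sub>m d, 0\<^sub>m d d)"]) auto
  next
    case False
    obtain w where "w \<in> lag_module" "w \<noteq> (0\<^sub>m d d, 0\<^sub>m d d)" using lag_module_nontrivial by blast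
    with False compatible_moduleD(1)[OF lag_module_compatible] show ?thesis
      by (intro that[of w]) (auto simp: prod_eq_iff)
  qed
  have "toep n d (lag_symbol k w) \<in> \<B>" using k w by (intro toep_lag_symbol_mem)
  moreover have "E_op n d k (toep n d (lag_symbol k w)) \<noteq> 0\<^sub>m (n*d) (n*d)"
    unfolding E_op_toep_lag_symbol[OF k] using k w nz subset_carrier
    by (intro toep_lag_symbol_ne_zero) auto
  ultimately show ?thesis by blast
qed

end

theorem theorem4p5:
  fixes n d :: nat and \<A> \<B> :: "complex mat set"
  assumes "n \<ge> 2" and "d \<ge> 1"
    and "maximal_comm_subalg d \<A>"
    and "maximal_subalg_in (n*d) (toeplitz_set n d \<A>) \<B>"
  shows "diag_toeplitz_set n d \<A> \<subseteq> \<B>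
    \<and> (\<forall>A\<in>\<B>. \<forall>k<n. E_op n d k A \<in> \<B>)
    \<and> \<B> = mat_span (n*d) (\<Union>k<n. E_op n d k ` \<B>)
    \<and> (\<forall>\<sigma>. \<sigma> permutes {1..n-1} \<longrightarrow> (\<forall>A\<in>\<B>. perm_act n d \<sigma> A \<in> \<B>))
    \<and> (\<forall>k<n. E_op n d k ` \<B> \<noteq> {0\<^sub>m (n*d) (n*d)})"
proof -
  interpret maximal_toeplitz_subalg n d \<A> \<B>
  proof unfold_locales
    show "comm_mat_subalg d \<A>" using assms(3) by (simp add: maximal_comm_subalg_def)
    show "1\<^sub>m d \<in> \<A>" using assms(3) by (rule maximal_comm_subalg_one)
  qed (use assms in auto)
  show ?thesis
    using diag_toeplitz_subset E_op_mem eq_span_E_op perm_act_mem E_op_image_ne_zero by blast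
qed

end
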